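(* In the randomized $\mathsf{No}\text{-}\mathsf{CD}$ model, both of the following tasks can be solved (with high probability) by a randomized algorithm taking $O(\mathcal{C}\log^3 n)$ time and $O(\mathcal{C}\log^3 n)$ energy. Downward transmission: given $i\ge0$ and a subset $V'$ of layer-$i$ vertices holding messages, every layer-$(i+1)$ vertex having at least one $V'$-neighbor in its own cluster receives the message of some such neighbor. Upward transmission: given $i>0$ and a subset $V'$ of layer-$i$ vertices holding messages, every layer-$(i-1)$ vertex having at least one $V'$-neighbor in its own cluster receives the message of some such neighbor.
   Context: Radio network: connected undirected graph $G$ with $n$ vertices and maximum degree $\Delta$; synchronized slots; a vertex transmits, listens or idles per slot, transmit/listen costing one unit of energy. $\mathsf{No}\text{-}\mathsf{CD}$: a listener receives a message iff exactly one neighbor transmits; otherwise silence. A labeling $\mathcal{L}:V\to\{0,\ldots,n-1\}$ is good if every $v$ with $\mathcal{L}(v)>0$ has a neighbor $u$ with $\mathcal{L}(u)=\mathcal{L}(v)-1$; $v$ is a layer-$i$ vertex if $\mathcal{L}(v)=i$. Cluster structure: each vertex $v$ has a unique $\mathrm{ID}(v)$ and a good-labeling value $\mathcal{L}(v)$; the vertices are partitioned into clusters, each cluster $C$ containing exactly one layer-0 vertex $r$ (its center), with every layer-$i$ vertex ($i>0$) of $C$ having a layer-$(i-1)$ neighbor in $C$; each $v\in C$ knows the cluster id $\mathrm{CID}(v)=\mathrm{ID}(r)$ and a shared, sufficiently long random string generated by $r$. All vertices know parameters $\mathcal{C}$ and $\mathcal{D}$ such that for each vertex $u$, the vertices of $N(u)\cup\{u\}$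 belong to at most $\mathcal{C}$ distinct clusters, and $\mathcal{D}$ upper bounds the number of layers. "With high probability" = failure probability $\le1/\mathrm{poly}(n)$. *)

theory Defs
  imports "HOL-Probability.Probability"
begin

text \<open>Vertices of the communication graph are natural numbers (names used only
for the model; algorithms see only their local input). The graph is given by a
vertex set V and an adjacency relation E.\<close>

datatype 'p action = Transmit 'p | Listen | Idle

text \<open>Local input of a vertex: global parameters n, C, D, the layer index i of the
task, its own ID, its label L(v), its cluster id CID(v), and its message
(Some m iff the vertex belongs to V').\<close>
datatype 'm linput = LInput (lin_n: nat) (lin_C: nat) (lin_D: nat) (lin_i: nat)
  (lin_ID: nat) (lin_L: nat) (lin_CID: nat) (lin_msg: "'m option")

text \<open>The number of slots and the length of
the random strings depend only on the global parameters (n, C, D, i). In every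
slot a vertex chooses an action as a function of its local input, its private
random string, the shared random string of its cluster and the history of what it
received so far (None = nothing received: idle, or silence).\<close>
record ('m, 'p) protocol =
  ptime :: "nat \<times> nat \<times> nat \<times> nat \<Rightarrow> nat"
  prand :: "nat \<times> nat \<times> nat \<times> nat \<Rightarrow> nat"
  pact  :: "'m linput \<Rightarrow> bool list \<Rightarrow> bool list \<Rightarrow> 'p option list \<Rightarrow> 'p action"
  pout  :: "'m linput \<Rightarrow> bool list \<Rightarrow> bool list \<Rightarrow> 'p option list \<Rightarrow> 'm option"

text \<open>No-CD reception rule: a listener receives a packet iff exactly one neighbour
transmits; otherwise it hears silence.\<close>
definition transmitters :: "(nat \<Rightarrow> nat \<Rightarrow> bool) \<Rightarrow> nat set \<Rightarrow> (nat \<Rightarrow> 'p action) \<Rightarrow> nat \<Rightarrow> nat set" where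
  "transmitters E V acts v = {u \<in> V. E v u \<and> (\<exists>p. acts u = Transmit p)}"

definition heard :: "(nat \<Rightarrow> nat \<Rightarrow> bool) \<Rightarrow> nat set \<Rightarrow> (nat \<Rightarrow> 'p action) \<Rightarrow> nat \<Rightarrow> 'p option" where
  "heard E V acts v =
     (if acts v = Listen \<and> card (transmitters E V acts v) = 1
      then (case acts (the_elem (transmitters E V acts v)) of Transmit p \<Rightarrow> Some p | _ \<Rightarrow> None)
      else None)"

text \<open>Histories after t slots. inp: local inputs, pr: private random strings,
sh: shared random string available to each vertex (that of its cluster center).\<close>
fun run :: "('m, 'p) protocol \<Rightarrow> (nat \<Rightarrow> nat \<Rightarrow> bool) \<Rightarrow> nat set \<Rightarrow> (nat \<Rightarrow> 'm linput)
            \<Rightarrow> (nat \<Rightarrow> bool list) \<Rightarrow> (nat \<Rightarrow> bool list) \<Rightarrow> nat \<Rightarrow> nat \<Rightarrow> 'p option list" where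
  "run A E V inp pr sh 0 = (\<lambda>v. [])"
| "run A E V inp pr sh (Suc t) =
     (let h = run A E V inp pr sh t;
          acts = (\<lambda>v. pact A (inp v) (pr v) (sh v) (h v))
      in (\<lambda>v. h v @ [heard E V acts v]))"

definition action_at :: "('m, 'p) protocol \<Rightarrow> (nat \<Rightarrow> nat \<Rightarrow> bool) \<Rightarrow> nat set \<Rightarrow> (nat \<Rightarrow> 'm linput)
            \<Rightarrow> (nat \<Rightarrow> bool list) \<Rightarrow> (nat \<Rightarrow> bool list) \<Rightarrow> nat \<Rightarrow> nat \<Rightarrow> 'p action" where
  "action_at A E V inp pr sh t v = pact A (inp v) (pr v) (sh v) (run A E V inp pr sh t v)"

definition energy :: "('m, 'p) protocol \<Rightarrow> (nat \<Rightarrow> nat \<Rightarrow> bool) \<Rightarrow> nat set \<Rightarrow> (nat \<Rightarrow> 'm linput)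
            \<Rightarrow> (nat \<Rightarrow> bool list) \<Rightarrow> (nat \<Rightarrow> bool list) \<Rightarrow> nat \<Rightarrow> nat \<Rightarrow> nat" where
  "energy A E V inp pr sh T v = card {t. t < T \<and> action_at A E V inp pr sh t v \<noteq> Idle}"

definition outputs :: "('m, 'p) protocol \<Rightarrow> (nat \<Rightarrow> nat \<Rightarrow> bool) \<Rightarrow> nat set \<Rightarrow> (nat \<Rightarrow> 'm linput)
            \<Rightarrow> (nat \<Rightarrow> bool list) \<Rightarrow> (nat \<Rightarrow> bool list) \<Rightarrow> nat \<Rightarrow> nat \<Rightarrow> 'm option" where
  "outputs A E V inp pr sh T v = pout A (inp v) (pr v) (sh v) (run A E V inp pr sh T v)"

definition cluster_instance :: "nat \<Rightarrow> nat \<Rightarrow> nat \<Rightarrow> nat \<Rightarrow> (nat \<Rightarrow> nat \<Rightarrow> bool) \<Rightarrow> nat set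
      \<Rightarrow> (nat \<Rightarrow> nat) \<Rightarrow> (nat \<Rightarrow> nat) \<Rightarrow> (nat \<Rightarrow> nat) \<Rightarrow> bool" where
  "cluster_instance n a C D E V ID L ctr \<longleftrightarrow>
     finite V \<and> card V = n \<and>
     (\<forall>u v. E u v \<longrightarrow> u \<in> V \<and> v \<in> V) \<and> (\<forall>u v. E u v \<longrightarrow> E v u) \<and> (\<forall>v. \<not> E v v) \<and>
     (\<forall>u\<in>V. \<forall>v\<in>V. E\<^sup>*\<^sup>* u v) \<and>
     inj_on ID V \<and> (\<forall>v\<in>V. ID v < n ^ a) \<and>
     (\<forall>v\<in>V. L v < n) \<and>
     (\<forall>v\<in>V. 0 < L v \<longrightarrow> (\<exists>u. E v u \<and> L u = L v - 1)) \<and>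
     (\<forall>v\<in>V. ctr v \<in> V \<and> ctr (ctr v) = ctr v \<and> L (ctr v) = 0) \<and>
     (\<forall>v\<in>V. L v = 0 \<longrightarrow> ctr v = v) \<and>
     (\<forall>v\<in>V. 0 < L v \<longrightarrow> (\<exists>u. E v u \<and> ctr u = ctr v \<and> L u = L v - 1)) \<and>
     (\<forall>u\<in>V. card (ctr ` ({u} \<union> {v. E u v})) \<le> C) \<and>
     (\<forall>v\<in>V. L v < D)"

datatype direction = Downward | Upward

definition is_target :: "direction \<Rightarrow> nat \<Rightarrow> nat \<Rightarrow> bool" where
  "is_target d i l = (case d of Downward \<Rightarrow> l = i + 1 | Upward \<Rightarrow> l + 1 = i)"

definition task_ok :: "direction \<Rightarrow> nat \<Rightarrow> (nat \<Rightarrow> nat \<Rightarrow> bool) \<Rightarrow> nat set \<Rightarrow> (nat \<Rightarrow> nat)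
      \<Rightarrow> (nat \<Rightarrow> nat) \<Rightarrow> nat set \<Rightarrow> (nat \<Rightarrow> 'm) \<Rightarrow> (nat \<Rightarrow> 'm option) \<Rightarrow> bool" where
  "task_ok d i E V L ctr V' msg out \<longleftrightarrow>
     (\<forall>w\<in>V. is_target d i (L w) \<and> (\<exists>u\<in>V'. E u w \<and> ctr u = ctr w) \<longrightarrow>
        (\<exists>u\<in>V'. E u w \<and> ctr u = ctr w \<and> out w = Some (msg u)))"

end

theory Submission
  imports Defs "HOL-Library.Discrete_Functions"
begin

text \<open>In every slot each holder of a message transmits it, tagged with its cluster id, iff two
  coin tosses succeed: one shared by its cluster, with probability about \<open>1/(4C)\<close>, and a private
  one with probability \<open>2\<^sup>-\<^sup>j\<close>, where \<open>j = t mod (log n + 3)\<close> cycles through the guesses for the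
  number of competing senders. Let \<open>w\<close> be a target with \<open>s\<close> senders in its own cluster. In a slot
  whose guess matches \<open>s\<close>, with probability at least \<open>1/(64C)\<close> the cluster of \<open>w\<close> is active, the
  at most \<open>C\<close> other clusters around \<open>w\<close> are silent and exactly one sender of the cluster of \<open>w\<close>
  transmits, so that \<open>w\<close> hears a packet tagged with its own cluster id; \<open>w\<close> outputs the first
  such packet. Repeating every guess \<open>64C(k + 1)(log n + 1)\<close> times leaves failure probability
  at most \<open>n\<^sup>-\<^sup>(\<^sup>k\<^sup>+\<^sup>1\<^sup>)\<close> per target, and a union bound over the targets gives success with
  probability \<open>1 - n\<^sup>-\<^sup>k\<close>. Time and energy are bounded by the number \<open>O(C log\<^sup>2 n)\<close> of slots.\<close>

section \<open>Biased coins from uniform bit strings\<close>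

definition leading_ones :: "nat \<Rightarrow> bool list \<Rightarrow> bool" where
  "leading_ones q bs \<longleftrightarrow> (\<forall>x\<in>set (take q bs). x)"

definition bitstrings :: "nat \<Rightarrow> bool list set" where
  "bitstrings b = {bs. length bs = b}"

definition ones_prefixed :: "nat \<Rightarrow> nat \<Rightarrow> bool list set" where
  "ones_prefixed b q = {bs \<in> bitstrings b. leading_ones q bs}"

lemma finite_bitstrings [simp]: "finite (bitstrings b)"
  using finite_lists_length_eq[of "UNIV :: bool set" b] by (simp add: bitstrings_def)

lemma card_bitstrings [simp]: "card (bitstrings b) = 2 ^ b"
  using card_lists_length_eq[of "UNIV :: bool set" b] by (simp add: bitstrings_def)

lemma ones_prefixed_subset: "ones_prefixed b q \<subseteq> bitstrings b"
  by (auto simp: ones_prefixed_def)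

lemma ones_prefixed_eq_image:
  assumes "q \<le> b"
  shows "ones_prefixed b q = (\<lambda>ys. replicate q True @ ys) ` bitstrings (b - q)"
proof (intro set_eqI iffI)
  fix xs assume xs: "xs \<in> ones_prefixed b q"
  then have "take q xs = replicate q True"
    using assms by (intro replicate_eqI) (auto simp: ones_prefixed_def bitstrings_def leading_ones_def)
  then have "xs = replicate q True @ drop q xs" by (metis append_take_drop_id)
  with xs show "xs \<in> (\<lambda>ys. replicate q True @ ys) ` bitstrings (b - q)"
    by (auto simp: ones_prefixed_def bitstrings_def)
qed (use assms in \<open>auto simp: ones_prefixed_def bitstrings_def leading_ones_def\<close>)

lemma real_card_ones_prefixed:
  assumes "q \<le> b"
  shows "real (card (ones_prefixed b q)) = 2 ^ b * (1 / 2 ^ q)"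
proof -
  have "card (ones_prefixed b q) = 2 ^ (b - q)"
    by (simp add: ones_prefixed_eq_image[OF assms] card_image inj_on_def)
  moreover have "(2::real) ^ (b - q) = 2 ^ b / 2 ^ q"
    using assms by (simp add: power_diff)
  ultimately show ?thesis by simp
qed

lemma real_card_not_ones_prefixed:
  assumes "q \<le> b"
  shows "real (card (bitstrings b - ones_prefixed b q)) = 2 ^ b * (1 - 1 / 2 ^ q)"
proof -
  have "card (ones_prefixed b q) \<le> card (bitstrings b)"
    by (intro card_mono ones_prefixed_subset) simp
  then show ?thesis
    using real_card_ones_prefixed[OF assms] ones_prefixed_subset[of b q]
    by (simp add: card_Diff_subset finite_subset of_nat_diff algebra_simps)
qed

definition coin_pattern :: "nat \<Rightarrow> nat \<Rightarrow> 'a set \<Rightarrow> 'a set \<Rightarrow> 'a \<Rightarrow> bool list set" where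
  "coin_pattern b j X Y v =
     (if v \<in> X then ones_prefixed b j else if v \<in> Y then bitstrings b - ones_prefixed b j
      else bitstrings b)"

lemma coin_pattern_subset: "coin_pattern b j X Y v \<subseteq> bitstrings b"
  using ones_prefixed_subset by (auto simp: coin_pattern_def)

lemma prod_if_mem_power:
  "finite A \<Longrightarrow> X \<subseteq> A \<Longrightarrow> (\<Prod>v\<in>A. if v \<in> X then y else 1) = y ^ card X"
  by (simp add: prod.If_cases Int_absorb1 Int_absorb2)

lemma real_card_PiE_coin_pattern:
  assumes "finite V" "X \<subseteq> V" "Y \<subseteq> V" "X \<inter> Y = {}" "j \<le> b"
  shows "real (card (PiE V (coin_pattern b j X Y)))
         = (2 ^ b) ^ card V * ((1 / 2 ^ j) ^ card X * (1 - 1 / 2 ^ j) ^ card Y)"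
proof -
  define x y :: real where "x = 1 / 2 ^ j" and "y = 1 - 1 / 2 ^ j"
  have "real (card (PiE V (coin_pattern b j X Y)))
        = (\<Prod>v\<in>V. 2 ^ b * ((if v \<in> X then x else 1) * (if v \<in> Y then y else 1)))"
    using assms(1,4)
    by (auto simp: card_PiE coin_pattern_def x_def y_def real_card_ones_prefixed[OF assms(5)]
        real_card_not_ones_prefixed[OF assms(5)] intro!: prod.cong)
  also have "\<dots> = (2 ^ b) ^ card V * (x ^ card X * y ^ card Y)"
    using assms(1-3) by (simp add: prod.distrib prod_if_mem_power)
  finally show ?thesis by (simp add: x_def y_def)
qed

lemma one_minus_inverse_power_ge_half:
  assumes "2 * m \<le> (2::nat) ^ j"
  shows "1 / 2 \<le> (1 - 1 / 2 ^ j :: real) ^ m"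
proof -
  have "-1 \<le> - 1 / (2::real) ^ j" by (simp add: field_simps)
  from Bernoulli_inequality[OF this, of m]
  have "1 - real m * (1 / 2 ^ j) \<le> (1 - 1 / 2 ^ j :: real) ^ m" by simp
  moreover have "real (2 * m) \<le> real (2 ^ j)" using assms by (simp only: of_nat_le_iff)
  then have "real m * (1 / 2 ^ j) \<le> 1 / 2" by (simp add: field_simps)
  ultimately show ?thesis by linarith
qed

lemma power_floor_log_add2_le: "0 < s \<Longrightarrow> 2 ^ (floor_log s + 2) \<le> 4 * s"
  using floor_log_exp2_le[of s] by simp

lemma double_le_power_floor_log_add2: "2 * s \<le> 2 ^ (floor_log s + 2)"
  using floor_log_exp2_gt[of s] by simp

text \<open>The right-hand side is the probability that exactly one of \<open>s\<close> private tosses of bias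
  \<open>2\<^sup>-\<^sup>j\<close>, \<open>j = \<lfloor>log s\<rfloor> + 2\<close>, succeeds, that the toss of one cluster succeeds and that those of
  \<open>m\<close> further clusters fail, cluster tosses having bias \<open>2\<^sup>-\<^sup>q\<close>, \<open>q = \<lfloor>log C\<rfloor> + 2\<close>.\<close>

lemma isolation_probability_ge:
  assumes "0 < s" "m \<le> C" "0 < C"
  shows "1 / (64 * real C)
    \<le> real s * ((1 / 2 ^ (floor_log s + 2)) * (1 - 1 / 2 ^ (floor_log s + 2)) ^ (s - 1)
        * ((1 / 2 ^ (floor_log C + 2)) * (1 - 1 / 2 ^ (floor_log C + 2)) ^ m))"
proof -
  define j q where "j = floor_log s + 2" and "q = floor_log C + 2"
  have "real (2 ^ j) \<le> real (4 * s)"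
    using power_floor_log_add2_le[OF assms(1)] unfolding j_def of_nat_le_iff .
  then have s_coin: "1 / 4 \<le> real s * (1 / 2 ^ j)" by (simp add: field_simps)
  have "2 * (s - 1) \<le> 2 ^ j" using double_le_power_floor_log_add2[of s] by (simp add: j_def)
  then have s_rest: "1 / 2 \<le> (1 - 1 / 2 ^ j :: real) ^ (s - 1)"
    by (rule one_minus_inverse_power_ge_half)
  have "real (2 ^ q) \<le> real (4 * C)"
    using power_floor_log_add2_le[OF assms(3)] unfolding q_def of_nat_le_iff .
  then have C_coin: "1 / (4 * real C) \<le> 1 / 2 ^ q"
    using assms(3) by (intro divide_left_mono) auto
  have "2 * m \<le> 2 ^ q" using double_le_power_floor_log_add2[of C] assms(2) by (simp add: q_def)
  then have C_rest: "1 / 2 \<le> (1 - 1 / 2 ^ q :: real) ^ m"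
    by (rule one_minus_inverse_power_ge_half)
  have s_part: "1 / 4 * (1 / 2) \<le> real s * (1 / 2 ^ j) * (1 - 1 / 2 ^ j) ^ (s - 1)"
    using s_coin s_rest by (intro mult_mono) auto
  moreover have "1 / (4 * real C) * (1 / 2) \<le> 1 / 2 ^ q * (1 - 1 / 2 ^ q) ^ m"
    using C_coin C_rest by (intro mult_mono) auto
  ultimately have "1 / 4 * (1 / 2) * (1 / (4 * real C) * (1 / 2))
      \<le> real s * (1 / 2 ^ j) * (1 - 1 / 2 ^ j) ^ (s - 1) * (1 / 2 ^ q * (1 - 1 / 2 ^ q) ^ m)"
    by (rule mult_mono) (use s_part in linarith, simp)
  then show ?thesis by (simp add: j_def q_def mult.assoc)
qed

lemma two_power_le_exp: "(2::real) ^ m \<le> exp (real m)"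
proof -
  have "(2::real) ^ m \<le> exp 1 ^ m"
    using exp_ge_add_one_self[of 1] by (intro power_mono) auto
  then show ?thesis by (simp add: exp_of_nat_mult[symmetric])
qed

lemma prob_pmf_of_set_ge:
  assumes "finite \<Omega>" "\<Omega> \<noteq> {}" "real (card (\<Omega> - G)) \<le> real (card \<Omega>) * e"
  shows "1 - e \<le> measure_pmf.prob (pmf_of_set \<Omega>) G"
proof -
  have pos: "0 < real (card \<Omega>)" using assms(1,2) by (simp add: card_gt_0_iff)
  have "card \<Omega> = card (\<Omega> \<inter> G) + card (\<Omega> - G)"
    using assms(1) by (rule card_Int_Diff)
  then have "real (card \<Omega>) * (1 - e) \<le> real (card (\<Omega> \<inter> G))"
    using assms(3) by (simp add: algebra_simps)
  then show ?thesis
    using pos by (simp add: measure_pmf_of_set[OF assms(2,1)] field_simps)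
qed

definition phases :: "nat \<Rightarrow> nat" where
  "phases n = floor_log n + 3"

definition cluster_coin_bits :: "nat \<Rightarrow> nat" where
  "cluster_coin_bits C = floor_log C + 2"

definition bits_per_slot :: "nat \<Rightarrow> nat \<Rightarrow> nat" where
  "bits_per_slot n C = phases n + cluster_coin_bits C"

definition rounds :: "nat \<Rightarrow> nat \<Rightarrow> nat \<Rightarrow> nat" where
  "rounds k n C = 64 * C * (k + 1) * (floor_log n + 1)"

definition slots :: "nat \<Rightarrow> nat \<Rightarrow> nat \<Rightarrow> nat" where
  "slots k n C = rounds k n C * phases n"

lemma card_residue_class:
  assumes "j < L"
  shows "card {t. t < P * L \<and> t mod L = j} = P"
proof -
  have "{t. t < P * L \<and> t mod L = j} = (\<lambda>r. r * L + j) ` {..<P}"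
  proof (intro set_eqI iffI)
    fix t assume t: "t \<in> {t. t < P * L \<and> t mod L = j}"
    then have "t = t div L * L + j" "t div L < P"
      by (auto intro: less_mult_imp_div_less)
    then show "t \<in> (\<lambda>r. r * L + j) ` {..<P}" by blast
  next
    fix t assume "t \<in> (\<lambda>r. r * L + j) ` {..<P}"
    then obtain r where r: "r < P" "t = r * L + j" by auto
    have "Suc r * L \<le> P * L" using r(1) by (intro mult_le_mono1) simp
    then show "t \<in> {t. t < P * L \<and> t mod L = j}" using r assms by simp
  qed
  moreover have "inj_on (\<lambda>r. r * L + j) {..<P}"
    using assms by (intro inj_onI) simp
  ultimately show ?thesis by (simp add: card_image)
qed

lemma power_one_minus_le_inverse_power:
  assumes "0 < C" "0 < n"
  shows "(1 - 1 / (64 * real C)) ^ rounds k n C \<le> 1 / real n ^ (k + 1)"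
proof -
  define p where "p = 1 / (64 * real C)"
  define x where "x = real ((k + 1) * (floor_log n + 1))"
  have p: "0 \<le> 1 - p" using assms(1) by (simp add: p_def field_simps)
  have "(1 - p) ^ rounds k n C \<le> exp (- p) ^ rounds k n C"
    using p exp_ge_add_one_self[of "- p"] by (intro power_mono) auto
  also have "\<dots> = exp (- x)"
    using assms(1) by (simp add: exp_of_nat_mult[symmetric] rounds_def p_def x_def field_simps)
  also have "\<dots> \<le> 1 / real n ^ (k + 1)"
  proof -
    have "real n \<le> real (2 ^ (floor_log n + 1))"
      using floor_log_exp2_ge[of n] by (simp only: of_nat_le_iff) simp
    also have "\<dots> = 2 ^ (floor_log n + 1)" by simp
    also have "\<dots> \<le> exp (real (floor_log n + 1))" by (rule two_power_le_exp)
    finally have "real n ^ (k + 1) \<le> exp (real (floor_log n + 1)) ^ (k + 1)"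
      by (intro power_mono) auto
    also have "\<dots> = exp (real (k + 1) * real (floor_log n + 1))"
      by (rule exp_of_nat_mult[symmetric])
    also have "\<dots> = exp x" by (simp only: x_def of_nat_mult)
    finally show ?thesis
      using assms(2) by (simp add: exp_minus inverse_eq_divide divide_left_mono)
  qed
  finally show ?thesis by (simp add: p_def)
qed

lemma real_slots_le:
  assumes "2 \<le> n"
  shows "real (slots k n C) \<le> 512 * (real k + 1) * real C * (log 2 (real n)) ^ 3"
proof -
  define l M where "l = real (floor_log n)" and "M = log 2 (real n)"
  have "floor_log n = Suc (floor_log (n div 2))" using assms by (rule floor_log_rec)
  then have l1: "1 \<le> l" by (simp add: l_def)
  have "real (2 ^ floor_log n) \<le> real n"
    using floor_log_exp2_le[of n] assms by (simp only: of_nat_le_iff)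
  then have "(2::real) ^ floor_log n \<le> real n" by simp
  then have "log 2 ((2::real) ^ floor_log n) \<le> M"
    using assms by (simp add: M_def del: log_pow_cancel)
  then have lM: "l \<le> M" by (simp add: l_def)
  have "(l + 1) * (l + 3) \<le> (2 * M) * (4 * M)"
    using l1 lM by (intro mult_mono) auto
  also have "\<dots> \<le> 8 * (M * M * M)"
    using l1 lM by (simp add: mult_left_mono)
  finally have key: "(l + 1) * (l + 3) \<le> 8 * (M * M * M)" .
  have "real (slots k n C) = 64 * real C * (real k + 1) * ((l + 1) * (l + 3))"
    by (simp add: slots_def rounds_def phases_def l_def algebra_simps)
  also have "\<dots> \<le> 64 * real C * (real k + 1) * (8 * (M * M * M))"
    using key by (intro mult_left_mono) auto
  finally show ?thesis by (simp add: M_def power3_eq_cube algebra_simps)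
qed

definition chunk :: "nat \<Rightarrow> nat \<Rightarrow> bool list \<Rightarrow> bool list" where
  "chunk b t bs = take b (drop (t * b) bs)"

lemma length_chunk: "length bs = T * b \<Longrightarrow> t < T \<Longrightarrow> length (chunk b t bs) = b"
proof -
  assume "length bs = T * b" "t < T"
  moreover from \<open>t < T\<close> have "Suc t * b \<le> T * b" by (intro mult_le_mono1) simp
  ultimately show ?thesis by (simp add: chunk_def)
qed

lemma chunks_eq_imp_eq:
  assumes "length xs = T * b" "length ys = T * b" "\<And>t. t < T \<Longrightarrow> chunk b t xs = chunk b t ys"
  shows "xs = ys"
proof (rule nth_equalityI)
  show "length xs = length ys" using assms by simp
  fix i assume i: "i < length xs"
  then have "0 < b" using assms(1) by (cases b) auto
  define t r where "t = i div b" and "r = i mod b"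
  have ir: "i = t * b + r" and rb: "r < b" using \<open>0 < b\<close> by (simp_all add: t_def r_def)
  have "t < T" using i assms(1) \<open>0 < b\<close> by (simp add: t_def div_less_iff_less_mult)
  have "xs ! i = chunk b t xs ! r" using ir rb i by (simp add: chunk_def)
  also have "\<dots> = chunk b t ys ! r" using assms(3)[OF \<open>t < T\<close>] by simp
  also have "\<dots> = ys ! i"
  proof -
    have "t * b \<le> length ys" using ir i assms(1,2) by linarith
    then show ?thesis using ir rb by (simp add: chunk_def nth_drop)
  qed
  finally show "xs ! i = ys ! i" .
qed

section \<open>A single slot\<close>

locale clustered_network =
  fixes n C :: nat and E :: "nat \<Rightarrow> nat \<Rightarrow> bool" and V V' :: "nat set"
    and ctr :: "nat \<Rightarrow> nat"
  assumes finite_V: "finite V" and card_V: "card V = n"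
    and edge_in_V: "\<And>u v. E u v \<Longrightarrow> u \<in> V \<and> v \<in> V"
    and edge_sym: "\<And>u v. E u v \<Longrightarrow> E v u"
    and ctr_in_V: "\<And>v. v \<in> V \<Longrightarrow> ctr v \<in> V"
    and clusters_le: "\<And>u. u \<in> V \<Longrightarrow> card (ctr ` ({u} \<union> {v. E u v})) \<le> C"
    and V'_subset_V: "V' \<subseteq> V"
begin

abbreviation "b \<equiv> bits_per_slot n C"

text \<open>The coins of a single slot: a private and a cluster-shared bit string per vertex; the
  shared string of a vertex \<open>v\<close> is the one indexed by its center \<open>ctr v\<close>.\<close>

definition slot_space :: "((nat \<Rightarrow> bool list) \<times> (nat \<Rightarrow> bool list)) set" where
  "slot_space = PiE V (\<lambda>_. bitstrings b) \<times> PiE V (\<lambda>_. bitstrings b)"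

definition transmits :: "nat \<Rightarrow> (nat \<Rightarrow> bool list) \<times> (nat \<Rightarrow> bool list) \<Rightarrow> nat \<Rightarrow> bool" where
  "transmits t B v \<longleftrightarrow> v \<in> V' \<and> leading_ones (cluster_coin_bits C) (snd B (ctr v))
     \<and> leading_ones (t mod phases n) (fst B v)"

definition senders :: "nat \<Rightarrow> nat set" where
  "senders w = {u \<in> V'. E u w \<and> ctr u = ctr w}"

definition slot_success :: "nat \<Rightarrow> nat \<Rightarrow> ((nat \<Rightarrow> bool list) \<times> (nat \<Rightarrow> bool list)) set" where
  "slot_success w t = {B \<in> slot_space. \<exists>u\<in>senders w. {v \<in> V. E w v \<and> transmits t B v} = {u}}"

definition other_clusters :: "nat \<Rightarrow> nat set" where
  "other_clusters w = ctr ` {v \<in> V'. E w v} - {ctr w}"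

text \<open>Coins under which, among the senders of \<open>w\<close>, only \<open>u\<close> wins its private toss, the
  cluster of \<open>w\<close> wins its toss and all other clusters around \<open>w\<close> lose theirs; then \<open>u\<close> is the
  only transmitter \<open>w\<close> hears.\<close>

definition isolating :: "nat \<Rightarrow> nat \<Rightarrow> nat \<Rightarrow> ((nat \<Rightarrow> bool list) \<times> (nat \<Rightarrow> bool list)) set" where
  "isolating w t u =
     PiE V (coin_pattern b (t mod phases n) {u} (senders w - {u}))
     \<times> PiE V (coin_pattern b (cluster_coin_bits C) {ctr w} (other_clusters w))"

lemma finite_slot_space: "finite slot_space"
  unfolding slot_space_def using finite_V by (intro finite_cartesian_product finite_PiE) auto

lemma real_card_slot_space: "real (card slot_space) = (2 ^ b) ^ card V * (2 ^ b) ^ card V"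
  unfolding slot_space_def using finite_V by (simp add: card_cartesian_product card_PiE)

lemma senders_subset_V: "senders w \<subseteq> V"
  using V'_subset_V by (auto simp: senders_def)

lemma other_clusters_subset_V: "other_clusters w \<subseteq> V"
  using V'_subset_V ctr_in_V by (auto simp: other_clusters_def)

lemma finite_neighbour_clusters: "finite (ctr ` ({u} \<union> {v. E u v}))"
  using edge_in_V by (intro finite_imageI) (auto intro: finite_subset[OF _ finite_V])

lemma card_other_clusters_le: "w \<in> V \<Longrightarrow> card (other_clusters w) \<le> C"
  using card_mono[OF finite_neighbour_clusters, of "other_clusters w" w] clusters_le[of w]
  by (fastforce simp: other_clusters_def)

lemma C_pos:
  assumes "w \<in> V"
  shows "0 < C"
proof -
  have "ctr w \<in> ctr ` ({w} \<union> {v. E w v})" by blast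
  then have "0 < card (ctr ` ({w} \<union> {v. E w v}))"
    using finite_neighbour_clusters card_gt_0_iff by blast
  then show ?thesis using clusters_le[OF assms] by linarith
qed

lemma phase_le_bits: "t mod phases n \<le> b"
proof -
  have "t mod phases n < phases n" by (simp add: phases_def)
  then show ?thesis by (simp add: bits_per_slot_def)
qed

lemma cluster_coin_bits_le_bits: "cluster_coin_bits C \<le> b"
  by (simp add: bits_per_slot_def)

lemma isolating_subset_slot_space: "isolating w t u \<subseteq> slot_space"
  unfolding isolating_def slot_space_def
  by (intro Sigma_mono PiE_mono coin_pattern_subset)

lemma isolating_coins:
  assumes "B \<in> isolating w t u" "v \<in> V"
  shows "fst B v \<in> coin_pattern b (t mod phases n) {u} (senders w - {u}) v"
    and "snd B v \<in> coin_pattern b (cluster_coin_bits C) {ctr w} (other_clusters w) v"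
  using assms by (auto simp: isolating_def PiE_iff)

lemma isolating_subset_slot_success:
  assumes u: "u \<in> senders w"
  shows "isolating w t u \<subseteq> slot_success w t"
proof
  fix B assume B: "B \<in> isolating w t u"
  have uV: "u \<in> V" and u': "u \<in> V'" "E u w" "ctr u = ctr w"
    using u senders_subset_V by (auto simp: senders_def)
  note fst_B = isolating_coins(1)[OF B] and snd_B = isolating_coins(2)[OF B]
  have "transmits t B u"
    using fst_B[OF uV] snd_B[OF ctr_in_V[OF uV]] u'
    by (simp add: transmits_def coin_pattern_def ones_prefixed_def)
  moreover have "v = u" if v: "v \<in> V" "E w v" "transmits t B v" for v
  proof (rule ccontr)
    assume "v \<noteq> u"
    have "v \<in> V'" using v(3) by (simp add: transmits_def)
    show False
    proof (cases "ctr v = ctr w")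
      case True
      then have "v \<in> senders w - {u}"
        using \<open>v \<in> V'\<close> edge_sym[OF v(2)] \<open>v \<noteq> u\<close> by (simp add: senders_def)
      then show False
        using fst_B[OF v(1)] v(3) \<open>v \<noteq> u\<close> by (simp add: coin_pattern_def ones_prefixed_def transmits_def)
    next
      case False
      then have "ctr v \<in> other_clusters w" using \<open>v \<in> V'\<close> v(2) by (auto simp: other_clusters_def)
      then show False
        using snd_B[OF ctr_in_V[OF v(1)]] v(3) False
        by (auto simp: coin_pattern_def ones_prefixed_def transmits_def)
    qed
  qed
  ultimately have "{v \<in> V. E w v \<and> transmits t B v} = {u}"
    using uV edge_sym[OF u'(2)] by blast
  moreover have "B \<in> slot_space" using isolating_subset_slot_space B by blast
  ultimately show "B \<in> slot_success w t"
    using u by (auto simp: slot_success_def)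
qed

lemma isolating_disjoint: "disjoint_family_on (isolating w t) (senders w)"
  unfolding disjoint_family_on_def
proof (intro ballI impI)
  fix u1 u2 assume u: "u1 \<in> senders w" "u2 \<in> senders w" "u1 \<noteq> u2"
  then have "u1 \<in> V" using senders_subset_V by auto
  have "fst B u1 \<in> ones_prefixed b (t mod phases n)" if "B \<in> isolating w t u1" for B
    using isolating_coins(1)[OF that \<open>u1 \<in> V\<close>] by (simp add: coin_pattern_def)
  moreover have "fst B u1 \<notin> ones_prefixed b (t mod phases n)" if "B \<in> isolating w t u2" for B
    using isolating_coins(1)[OF that \<open>u1 \<in> V\<close>] u by (simp add: coin_pattern_def)
  ultimately show "isolating w t u1 \<inter> isolating w t u2 = {}" by blast
qed

lemma real_card_isolating:
  fixes t :: nat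
  assumes "w \<in> V" "u \<in> senders w"
  defines "j \<equiv> t mod phases n" and "q \<equiv> cluster_coin_bits C"
  shows "real (card (isolating w t u)) = real (card slot_space)
    * ((1 / 2 ^ j) * (1 - 1 / 2 ^ j) ^ (card (senders w) - 1)
       * ((1 / 2 ^ q) * (1 - 1 / 2 ^ q) ^ card (other_clusters w)))"
proof -
  have "finite (senders w)" using senders_subset_V finite_V by (rule finite_subset)
  then have "card (senders w - {u}) = card (senders w) - 1" using assms(2) by simp
  moreover have "real (card (PiE V (coin_pattern b j {u} (senders w - {u}))))
      = (2 ^ b) ^ card V * ((1 / 2 ^ j) ^ card {u} * (1 - 1 / 2 ^ j) ^ card (senders w - {u}))"
    using assms(2) senders_subset_V phase_le_bits unfolding j_def
    by (intro real_card_PiE_coin_pattern finite_V) auto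
  moreover have "real (card (PiE V (coin_pattern b q {ctr w} (other_clusters w))))
      = (2 ^ b) ^ card V * ((1 / 2 ^ q) ^ card {ctr w} * (1 - 1 / 2 ^ q) ^ card (other_clusters w))"
    using ctr_in_V[OF assms(1)] other_clusters_subset_V cluster_coin_bits_le_bits unfolding q_def
    by (intro real_card_PiE_coin_pattern finite_V) (auto simp: other_clusters_def)
  ultimately show ?thesis
    unfolding isolating_def card_cartesian_product of_nat_mult real_card_slot_space j_def q_def
    by (simp add: algebra_simps)
qed

lemma slot_success_card:
  assumes "w \<in> V" "senders w \<noteq> {}" "t mod phases n = floor_log (card (senders w)) + 2"
  shows "real (card slot_space) * (1 / (64 * real C)) \<le> real (card (slot_success w t))"
proof -
  define s where "s = card (senders w)"
  have fin: "finite (senders w)" using senders_subset_V finite_V by (rule finite_subset)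
  then have "0 < s" using assms(2) by (simp add: s_def card_gt_0_iff)
  have "real (card slot_space) * (1 / (64 * real C))
      \<le> real (card slot_space) * (real s * ((1 / 2 ^ (floor_log s + 2))
         * (1 - 1 / 2 ^ (floor_log s + 2)) ^ (s - 1) * ((1 / 2 ^ (floor_log C + 2))
         * (1 - 1 / 2 ^ (floor_log C + 2)) ^ card (other_clusters w))))"
    using isolation_probability_ge[OF \<open>0 < s\<close> card_other_clusters_le C_pos] assms(1)
    by (intro mult_left_mono) auto
  also have "\<dots> = (\<Sum>u\<in>senders w. real (card (isolating w t u)))"
    using assms by (simp add: real_card_isolating s_def cluster_coin_bits_def)
  also have "\<dots> = real (card (\<Union>u\<in>senders w. isolating w t u))"
    using card_UN_disjoint'[OF isolating_disjoint _ fin]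
      finite_subset[OF isolating_subset_slot_space finite_slot_space] by simp
  also have "\<dots> \<le> real (card (slot_success w t))"
  proof -
    have "(\<Union>u\<in>senders w. isolating w t u) \<subseteq> slot_success w t"
      using isolating_subset_slot_success by blast
    moreover have "finite (slot_success w t)"
      using finite_slot_space by (simp add: slot_success_def)
    ultimately show ?thesis by (intro of_nat_mono card_mono)
  qed
  finally show ?thesis .
qed

lemma real_card_slot_failure_le:
  assumes "w \<in> V" "senders w \<noteq> {}" "t mod phases n = floor_log (card (senders w)) + 2"
  shows "real (card (slot_space - slot_success w t))
    \<le> real (card slot_space) * (1 - 1 / (64 * real C))"
proof -
  have "slot_success w t \<subseteq> slot_space" by (auto simp: slot_success_def)
  then have "real (card (slot_space - slot_success w t))
      = real (card slot_space) - real (card (slot_success w t))"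
    using finite_slot_space by (simp add: card_Diff_subset finite_subset card_mono of_nat_diff)
  then show ?thesis
    using slot_success_card[OF assms] by (simp add: algebra_simps)
qed

text \<open>Slot \<open>t\<close> uses the \<open>t\<close>-th chunk of \<open>b\<close> bits of every random string.\<close>

definition sample_space :: "nat \<Rightarrow> ((nat \<Rightarrow> bool list) \<times> (nat \<Rightarrow> bool list)) set" where
  "sample_space T = PiE V (\<lambda>_. bitstrings (T * b)) \<times> PiE V (\<lambda>_. bitstrings (T * b))"

definition slot_coins :: "nat \<Rightarrow> (nat \<Rightarrow> bool list) \<times> (nat \<Rightarrow> bool list)
    \<Rightarrow> nat \<Rightarrow> (nat \<Rightarrow> bool list) \<times> (nat \<Rightarrow> bool list)" where
  "slot_coins T \<omega> =
     (\<lambda>t\<in>{..<T}. ((\<lambda>v\<in>V. chunk b t (fst \<omega> v)), (\<lambda>v\<in>V. chunk b t (snd \<omega> v))))"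

lemma finite_sample_space: "finite (sample_space T)"
  unfolding sample_space_def using finite_V by (intro finite_cartesian_product finite_PiE) auto

lemma sample_space_nonempty: "sample_space T \<noteq> {}"
proof -
  have "((\<lambda>_\<in>V. replicate (T * b) False), (\<lambda>_\<in>V. replicate (T * b) False)) \<in> sample_space T"
    by (simp add: sample_space_def bitstrings_def)
  then show ?thesis by auto
qed

lemma card_sample_space: "card (sample_space T) = card slot_space ^ T"
proof -
  have "card (sample_space T) = ((2 ^ (T * b)) ^ card V) * ((2 ^ (T * b)) ^ card V)"
    unfolding sample_space_def
    by (simp only: card_cartesian_product card_PiE[OF finite_V] card_bitstrings prod_constant)
  also have "\<dots> = (((2 ^ b) ^ card V) * ((2 ^ b) ^ card V)) ^ T"
  proof -
    have "((2::nat) ^ (T * b)) ^ card V = ((2 ^ b) ^ card V) ^ T"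
      by (simp only: power_mult[symmetric]) (simp add: mult_ac)
    then show ?thesis by (simp add: power_mult_distrib)
  qed
  also have "\<dots> = card slot_space ^ T"
    unfolding slot_space_def
    by (simp only: card_cartesian_product card_PiE[OF finite_V] card_bitstrings prod_constant)
  finally show ?thesis .
qed

lemma length_sample_space:
  assumes "\<omega> \<in> sample_space T" "v \<in> V"
  shows "length (fst \<omega> v) = T * b" "length (snd \<omega> v) = T * b"
  using assms by (auto simp: sample_space_def bitstrings_def PiE_iff)

lemma slot_coins_in:
  assumes "\<omega> \<in> sample_space T"
  shows "slot_coins T \<omega> \<in> PiE {..<T} (\<lambda>_. slot_space)"
  using length_chunk[OF length_sample_space(1)[OF assms]]
    length_chunk[OF length_sample_space(2)[OF assms]]
  by (auto simp: slot_coins_def slot_space_def bitstrings_def)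

lemma inj_on_slot_coins: "inj_on (slot_coins T) (sample_space T)"
proof (rule inj_onI)
  fix \<omega>1 \<omega>2
  assume \<omega>: "\<omega>1 \<in> sample_space T" "\<omega>2 \<in> sample_space T"
    and eq: "slot_coins T \<omega>1 = slot_coins T \<omega>2"
  have chunks: "chunk b t (fst \<omega>1 v) = chunk b t (fst \<omega>2 v)"
    "chunk b t (snd \<omega>1 v) = chunk b t (snd \<omega>2 v)" if "t < T" "v \<in> V" for t v
  proof -
    have "(\<lambda>v\<in>V. chunk b t (fst \<omega>1 v)) v = (\<lambda>v\<in>V. chunk b t (fst \<omega>2 v)) v
        \<and> (\<lambda>v\<in>V. chunk b t (snd \<omega>1 v)) v = (\<lambda>v\<in>V. chunk b t (snd \<omega>2 v)) v"
      using fun_cong[OF eq, of t] that(1) by (simp add: slot_coins_def)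
    then show "chunk b t (fst \<omega>1 v) = chunk b t (fst \<omega>2 v)"
      "chunk b t (snd \<omega>1 v) = chunk b t (snd \<omega>2 v)" using that(2) by simp_all
  qed
  note lengths = length_sample_space[OF \<omega>(1)] length_sample_space[OF \<omega>(2)]
  have ext: "fst \<omega>1 \<in> extensional V" "fst \<omega>2 \<in> extensional V"
    "snd \<omega>1 \<in> extensional V" "snd \<omega>2 \<in> extensional V"
    using \<omega> by (auto simp: sample_space_def PiE_iff)
  have "fst \<omega>1 = fst \<omega>2"
    using ext(1,2) chunks_eq_imp_eq[OF lengths(1,3) chunks(1)] by (rule extensionalityI)
  moreover have "snd \<omega>1 = snd \<omega>2"
    using ext(3,4) chunks_eq_imp_eq[OF lengths(2,4) chunks(2)] by (rule extensionalityI)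
  ultimately show "\<omega>1 = \<omega>2" by (simp add: prod_eq_iff)
qed

lemma card_all_slots_fail_le:
  "card {\<omega> \<in> sample_space T. \<forall>t<T. slot_coins T \<omega> t \<notin> slot_success w t}
   \<le> (\<Prod>t<T. card (slot_space - slot_success w t))"
proof -
  let ?F = "{\<omega> \<in> sample_space T. \<forall>t<T. slot_coins T \<omega> t \<notin> slot_success w t}"
  have "slot_coins T \<omega> \<in> PiE {..<T} (\<lambda>t. slot_space - slot_success w t)" if "\<omega> \<in> ?F" for \<omega>
    using slot_coins_in[of \<omega> T] that by (auto simp: PiE_iff)
  then have "card (slot_coins T ` ?F) \<le> card (PiE {..<T} (\<lambda>t. slot_space - slot_success w t))"
    using finite_slot_space by (intro card_mono finite_PiE) auto
  moreover have "card (slot_coins T ` ?F) = card ?F"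
    by (rule card_image, rule inj_on_subset[OF inj_on_slot_coins]) auto
  ultimately show ?thesis by (simp add: card_PiE)
qed

text \<open>Among the \<open>slots k n C\<close> slots, \<open>rounds k n C\<close> many use the phase matched to the number of
  senders of \<open>w\<close>.\<close>

lemma real_card_all_slots_fail_le:
  fixes k :: nat
  assumes "w \<in> V" "senders w \<noteq> {}" "0 < n"
  defines "T \<equiv> slots k n C"
  shows "real (card {\<omega> \<in> sample_space T. \<forall>t<T. slot_coins T \<omega> t \<notin> slot_success w t})
     \<le> real (card (sample_space T)) * (1 / real n ^ (k + 1))"
proof -
  define p where "p = 1 - 1 / (64 * real C)"
  define G where "G = {t. t < T \<and> t mod phases n = floor_log (card (senders w)) + 2}"
  have "card (senders w) \<le> n" using card_mono[OF finite_V senders_subset_V] card_V by simp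
  then have "floor_log (card (senders w)) \<le> floor_log n" by (rule floor_log_le_iff)
  then have "floor_log (card (senders w)) + 2 < phases n" by (simp add: phases_def)
  then have "card G = rounds k n C"
    unfolding G_def T_def slots_def by (rule card_residue_class)
  moreover have "G \<subseteq> {..<T}" by (auto simp: G_def)
  ultimately have matched: "(\<Prod>t<T. if t \<in> G then p else 1) = p ^ rounds k n C"
    using prod_if_mem_power[of "{..<T}" G p] by simp
  have fail_factor: "real (card (slot_space - slot_success w t))
      \<le> real (card slot_space) * (if t \<in> G then p else 1)" for t
  proof (cases "t \<in> G")
    case True
    then show ?thesis using real_card_slot_failure_le[OF assms(1,2)] by (simp add: G_def p_def)
  next
    case False
    have "card (slot_space - slot_success w t) \<le> card slot_space"
      using finite_slot_space by (intro card_mono) auto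
    with False show ?thesis by simp
  qed
  have "real (card {\<omega> \<in> sample_space T. \<forall>t<T. slot_coins T \<omega> t \<notin> slot_success w t})
      \<le> real (\<Prod>t<T. card (slot_space - slot_success w t))"
    using card_all_slots_fail_le[of T w] by (simp only: of_nat_le_iff)
  also have "\<dots> = (\<Prod>t<T. real (card (slot_space - slot_success w t)))"
    by (rule of_nat_prod)
  also have "\<dots> \<le> (\<Prod>t<T. real (card slot_space) * (if t \<in> G then p else 1))"
    by (intro prod_mono) (simp add: fail_factor)
  also have "\<dots> = real (card (sample_space T)) * p ^ rounds k n C"
    by (simp add: prod.distrib matched card_sample_space)
  also have "\<dots> \<le> real (card (sample_space T)) * (1 / real n ^ (k + 1))"
    using power_one_minus_le_inverse_power[OF C_pos[OF assms(1)] assms(3)]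
    by (intro mult_left_mono) (auto simp: p_def)
  finally show ?thesis .
qed

end

lemma cluster_instance_clustered_network:
  assumes "cluster_instance n a C D E V ID L ctr" "V' \<subseteq> V"
  shows "clustered_network n C E V V' ctr"
proof -
  from assms(1) have "finite V" "card V = n"
    "\<And>u v. E u v \<Longrightarrow> u \<in> V \<and> v \<in> V" "\<And>u v. E u v \<Longrightarrow> E v u"
    "\<And>v. v \<in> V \<Longrightarrow> ctr v \<in> V" "\<And>u. u \<in> V \<Longrightarrow> card (ctr ` ({u} \<union> {v. E u v})) \<le> C"
    unfolding cluster_instance_def by auto
  with assms(2) show ?thesis by unfold_locales
qed

section \<open>The protocol\<close>

text \<open>Packets carry the message together with the sender's cluster id, so that a listener can
  discard packets from other clusters.\<close>

definition protocol_action :: "'m linput \<Rightarrow> bool list \<Rightarrow> bool list \<Rightarrow> nat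
    \<Rightarrow> ('m option \<times> nat list) action" where
  "protocol_action inp pr sh t = (case lin_msg inp of
     None \<Rightarrow> Listen
   | Some m \<Rightarrow>
       (if leading_ones (cluster_coin_bits (lin_C inp))
             (chunk (bits_per_slot (lin_n inp) (lin_C inp)) t sh)
         \<and> leading_ones (t mod phases (lin_n inp))
             (chunk (bits_per_slot (lin_n inp) (lin_C inp)) t pr)
        then Transmit (Some m, [lin_CID inp]) else Idle))"

definition own_cluster_packet :: "nat \<Rightarrow> ('m option \<times> nat list) option \<Rightarrow> bool" where
  "own_cluster_packet c x \<longleftrightarrow> (\<exists>m. x = Some (Some m, [c]))"

definition first_own_cluster_message :: "'m linput \<Rightarrow> ('m option \<times> nat list) option list
    \<Rightarrow> 'm option" where
  "first_own_cluster_message inp h = (case filter (own_cluster_packet (lin_CID inp)) h of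
     [] \<Rightarrow> None
   | x # _ \<Rightarrow> (case x of Some (Some m, _) \<Rightarrow> Some m | _ \<Rightarrow> None))"

definition transmission_protocol :: "nat \<Rightarrow> ('m, 'm option \<times> nat list) protocol" where
  "transmission_protocol k =
     \<lparr>ptime = (\<lambda>(n, C, D, i). slots k n C),
      prand = (\<lambda>(n, C, D, i). slots k n C * bits_per_slot n C),
      pact = (\<lambda>inp pr sh h. protocol_action inp pr sh (length h)),
      pout = (\<lambda>inp pr sh h. first_own_cluster_message inp h)\<rparr>"

lemma run_transmission_protocol:
  "run (transmission_protocol k) E V inp pr sh t =
     (\<lambda>v. map (\<lambda>s. heard E V (\<lambda>u. protocol_action (inp u) (pr u) (sh u) s) v) [0..<t])"
proof (induction t)
  case (Suc t)
  then have "(\<lambda>v. pact (transmission_protocol k) (inp v) (pr v) (sh v)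
      (run (transmission_protocol k) E V inp pr sh t v))
      = (\<lambda>u. protocol_action (inp u) (pr u) (sh u) t)"
    by (simp add: transmission_protocol_def)
  with Suc show ?case by (simp add: Let_def)
qed simp

lemma outputs_transmission_protocol:
  "outputs (transmission_protocol k) E V inp pr sh T v = first_own_cluster_message (inp v)
     (map (\<lambda>s. heard E V (\<lambda>u. protocol_action (inp u) (pr u) (sh u) s) v) [0..<T])"
  unfolding outputs_def run_transmission_protocol by (simp add: transmission_protocol_def)

lemma energy_le_time: "energy A E V inp pr sh T v \<le> T"
proof -
  have "{t. t < T \<and> action_at A E V inp pr sh t v \<noteq> Idle} \<subseteq> {..<T}" by auto
  from card_mono[OF finite_lessThan this] show ?thesis by (simp add: energy_def)
qed

lemma heard_unique_transmitter:
  assumes "acts w = Listen" "transmitters E V acts w = {u}" "acts u = Transmit p"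
  shows "heard E V acts w = Some p"
  using assms by (simp add: heard_def)

lemma heard_transmitter:
  assumes "heard E V acts w = Some p"
  obtains u where "u \<in> V" "E w u" "acts u = Transmit p"
proof -
  have "acts w = Listen" "card (transmitters E V acts w) = 1"
    using assms by (simp_all add: heard_def split: if_splits)
  moreover obtain u where u: "transmitters E V acts w = {u}"
    using \<open>card (transmitters E V acts w) = 1\<close> by (rule card_1_singletonE)
  ultimately have "heard E V acts w = (case acts u of Transmit p \<Rightarrow> Some p | _ \<Rightarrow> None)"
    by (simp add: heard_def)
  with assms have "acts u = Transmit p" by (cases "acts u") auto
  moreover have "u \<in> V" "E w u" using u by (auto simp: transmitters_def)
  ultimately show thesis using that by blast
qed

lemma first_own_cluster_message_heard:
  assumes "x \<in> set h" "own_cluster_packet (lin_CID inp) x"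
  obtains m where "Some (Some m, [lin_CID inp]) \<in> set h"
    "first_own_cluster_message inp h = Some m"
proof -
  from assms obtain y rest where first: "filter (own_cluster_packet (lin_CID inp)) h = y # rest"
    by (metis filter_empty_conv neq_Nil_conv)
  then have "y \<in> set (filter (own_cluster_packet (lin_CID inp)) h)" by simp
  then obtain m where "y = Some (Some m, [lin_CID inp])" "y \<in> set h"
    by (auto simp: own_cluster_packet_def)
  with first show thesis
    using that by (simp add: first_own_cluster_message_def)
qed

context clustered_network
begin

lemma own_cluster_packet_heard:
  fixes msg :: "nat \<Rightarrow> 'm" and ID :: "nat \<Rightarrow> nat"
  assumes "inj_on ID V" "w \<in> V"
    and packets: "\<And>u p. acts u = Transmit p \<Longrightarrow> u \<in> V' \<and> p = (Some (msg u), [ID (ctr u)])"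
    and "heard E V acts w = Some (Some m, [ID (ctr w)])"
  shows "\<exists>u\<in>V'. E u w \<and> ctr u = ctr w \<and> m = msg u"
proof -
  obtain u where u: "u \<in> V" "E w u" "acts u = Transmit (Some m, [ID (ctr w)])"
    using assms(4) by (rule heard_transmitter)
  from packets[OF u(3)] have "u \<in> V'" "ID (ctr u) = ID (ctr w)" "m = msg u" by auto
  moreover from \<open>ID (ctr u) = ID (ctr w)\<close> have "ctr u = ctr w"
    using assms(1,2) ctr_in_V u(1) by (auto dest: inj_onD)
  ultimately show ?thesis using edge_sym[OF u(2)] by auto
qed

lemma output_if_slot_success:
  fixes msg :: "nat \<Rightarrow> 'm" and ID L :: "nat \<Rightarrow> nat" and D i :: nat
  assumes inj_ID: "inj_on ID V" and "w \<in> V" "w \<notin> V'" "t < T"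
    and success: "slot_coins T \<omega> t \<in> slot_success w t"
  defines "inp \<equiv> \<lambda>v. LInput n C D i (ID v) (L v) (ID (ctr v))
                      (if v \<in> V' then Some (msg v) else None)"
  shows "\<exists>u\<in>V'. E u w \<and> ctr u = ctr w
    \<and> outputs (transmission_protocol k) E V inp (fst \<omega>) (snd \<omega> \<circ> ctr) T w = Some (msg u)"
proof -
  define acts where "acts s = (\<lambda>u. protocol_action (inp u) (fst \<omega> u) (snd \<omega> (ctr u)) s)" for s
  define hist where "hist = map (\<lambda>s. heard E V (acts s) w) [0..<T]"
  have transmits_iff: "(\<exists>p. acts s u = Transmit p) \<longleftrightarrow> transmits s (slot_coins T \<omega> s) u"
    if "u \<in> V" "s < T" for u s
    using that ctr_in_V[OF that(1)]
    by (simp add: acts_def protocol_action_def inp_def slot_coins_def transmits_def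
        split: option.splits)
  have packet: "u \<in> V' \<and> p = (Some (msg u), [ID (ctr u)])" if "acts s u = Transmit p" for s u p
    using that by (auto simp: acts_def protocol_action_def inp_def split: if_splits option.splits)
  obtain u where u: "u \<in> senders w"
    and tr: "{v \<in> V. E w v \<and> transmits t (slot_coins T \<omega> t) v} = {u}"
    using success by (auto simp: slot_success_def)
  have "transmitters E V (acts t) w = {v \<in> V. E w v \<and> transmits t (slot_coins T \<omega> t) v}"
    unfolding transmitters_def using transmits_iff[OF _ \<open>t < T\<close>] by blast
  with tr have "transmitters E V (acts t) w = {u}" by simp
  moreover obtain p where "acts t u = Transmit p"
    using transmits_iff[OF _ \<open>t < T\<close>, of u] tr by blast
  moreover have "acts t w = Listen" using \<open>w \<notin> V'\<close> by (simp add: acts_def protocol_action_def inp_def)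
  ultimately have "hist ! t = Some p"
    using \<open>t < T\<close> heard_unique_transmitter by (simp add: hist_def)
  moreover have "length hist = T" by (simp add: hist_def)
  ultimately have "Some p \<in> set hist" using nth_mem[of t hist] \<open>t < T\<close> by simp
  moreover have "own_cluster_packet (lin_CID (inp w)) (Some p)"
    using packet[OF \<open>acts t u = Transmit p\<close>] u
    by (simp add: own_cluster_packet_def senders_def inp_def)
  ultimately obtain m where "Some (Some m, [lin_CID (inp w)]) \<in> set hist"
    and out: "first_own_cluster_message (inp w) hist = Some m"
    by (rule first_own_cluster_message_heard)
  then obtain s where "heard E V (acts s) w = Some (Some m, [ID (ctr w)])"
    by (auto simp: hist_def inp_def)
  then obtain v where "v \<in> V'" "E v w" "ctr v = ctr w" "m = msg v"
    using own_cluster_packet_heard[OF inj_ID \<open>w \<in> V\<close> packet[of s]] by blast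
  with out show ?thesis
    by (auto simp: outputs_transmission_protocol acts_def hist_def)
qed

lemma task_ok_if_no_target_fails:
  fixes msg :: "nat \<Rightarrow> 'm" and ID L :: "nat \<Rightarrow> nat" and d :: direction and k D i :: nat
  assumes inj_ID: "inj_on ID V" and V'_layer: "V' \<subseteq> {v \<in> V. L v = i}"
    and no_failure: "\<And>w. w \<in> V \<Longrightarrow> is_target d i (L w) \<Longrightarrow> senders w \<noteq> {}
      \<Longrightarrow> \<exists>t<T. slot_coins T \<omega> t \<in> slot_success w t"
  defines "inp \<equiv> \<lambda>v. LInput n C D i (ID v) (L v) (ID (ctr v))
                      (if v \<in> V' then Some (msg v) else None)"
  shows "task_ok d i E V L ctr V' msg
    (outputs (transmission_protocol k) E V inp (fst \<omega>) (snd \<omega> \<circ> ctr) T)"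
  unfolding task_ok_def
proof (intro ballI impI)
  fix w assume "w \<in> V" and target: "is_target d i (L w) \<and> (\<exists>u\<in>V'. E u w \<and> ctr u = ctr w)"
  then obtain t where "t < T" "slot_coins T \<omega> t \<in> slot_success w t"
    using no_failure by (auto simp: senders_def)
  moreover have "w \<notin> V'" using target V'_layer by (cases d) (auto simp: is_target_def)
  ultimately show "\<exists>u\<in>V'. E u w \<and> ctr u = ctr w
      \<and> outputs (transmission_protocol k) E V inp (fst \<omega>) (snd \<omega> \<circ> ctr) T w = Some (msg u)"
    unfolding inp_def using output_if_slot_success[OF inj_ID \<open>w \<in> V\<close>] by blast
qed

lemma transmission_protocol_succeeds:
  fixes msg :: "nat \<Rightarrow> 'm" and ID L :: "nat \<Rightarrow> nat" and d :: direction and k D i :: nat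
  assumes inj_ID: "inj_on ID V" and "2 \<le> n" and V'_layer: "V' \<subseteq> {v \<in> V. L v = i}"
  defines "T \<equiv> slots k n C"
    and "inp \<equiv> \<lambda>v. LInput n C D i (ID v) (L v) (ID (ctr v))
                      (if v \<in> V' then Some (msg v) else None)"
  shows "1 - 1 / real n ^ k \<le> measure_pmf.prob (pmf_of_set (sample_space T))
    {(pr, sh). task_ok d i E V L ctr V' msg
                 (outputs (transmission_protocol k) E V inp pr (sh \<circ> ctr) T)}"
proof -
  define W where "W = {w \<in> V. is_target d i (L w) \<and> senders w \<noteq> {}}"
  define fails where "fails w = {\<omega> \<in> sample_space T. \<forall>t<T. slot_coins T \<omega> t \<notin> slot_success w t}"
    for w
  let ?Good = "{(pr, sh). task_ok d i E V L ctr V' msg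
                 (outputs (transmission_protocol k) E V inp pr (sh \<circ> ctr) T)}"
  have "\<omega> \<in> (\<Union>w\<in>W. fails w)" if "\<omega> \<in> sample_space T" "\<omega> \<notin> ?Good" for \<omega>
  proof (rule ccontr)
    assume "\<omega> \<notin> (\<Union>w\<in>W. fails w)"
    then have "\<exists>t<T. slot_coins T \<omega> t \<in> slot_success w t"
      if "w \<in> V" "is_target d i (L w)" "senders w \<noteq> {}" for w
      using that \<open>\<omega> \<in> sample_space T\<close> by (auto simp: W_def fails_def)
    then have "task_ok d i E V L ctr V' msg
        (outputs (transmission_protocol k) E V inp (fst \<omega>) (snd \<omega> \<circ> ctr) T)"
      unfolding inp_def by (rule task_ok_if_no_target_fails[OF inj_ID V'_layer])
    with \<open>\<omega> \<notin> ?Good\<close> show False by (simp add: case_prod_beta)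
  qed
  then have cover: "sample_space T - ?Good \<subseteq> (\<Union>w\<in>W. fails w)" by blast
  have "finite W" "card W \<le> n"
    using finite_V card_mono[OF finite_V] card_V by (auto simp: W_def)
  have "card (sample_space T - ?Good) \<le> card (\<Union>w\<in>W. fails w)"
    using cover \<open>finite W\<close> finite_sample_space by (intro card_mono) (auto simp: fails_def)
  also have "\<dots> \<le> (\<Sum>w\<in>W. card (fails w))"
    using \<open>finite W\<close> by (rule card_UN_le)
  finally have "real (card (sample_space T - ?Good)) \<le> real (\<Sum>w\<in>W. card (fails w))"
    by (simp only: of_nat_le_iff)
  also have "\<dots> = (\<Sum>w\<in>W. real (card (fails w)))"
    by (rule of_nat_sum)
  also have "\<dots> \<le> (\<Sum>w\<in>W. real (card (sample_space T)) * (1 / real n ^ (k + 1)))"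
    using \<open>2 \<le> n\<close> unfolding fails_def T_def
    by (intro sum_mono real_card_all_slots_fail_le) (auto simp: W_def)
  also have "\<dots> = real (card W) * (real (card (sample_space T)) * (1 / real n ^ (k + 1)))"
    by simp
  also have "\<dots> \<le> real n * (real (card (sample_space T)) * (1 / real n ^ (k + 1)))"
    using \<open>card W \<le> n\<close> by (intro mult_right_mono) simp_all
  also have "\<dots> = real (card (sample_space T)) * (1 / real n ^ k)"
    using \<open>2 \<le> n\<close> by (simp add: field_simps)
  finally show ?thesis
    by (rule prob_pmf_of_set_ge[OF finite_sample_space sample_space_nonempty])
qed

end

lemma ptime_transmission_protocol:
  "ptime (transmission_protocol k) (n, C, D, i) = slots k n C"
  by (simp add: transmission_protocol_def)

lemma prand_transmission_protocol:
  "prand (transmission_protocol k) (n, C, D, i) = slots k n C * bits_per_slot n C"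
  by (simp add: transmission_protocol_def)

lemma transmission_protocol_meets_bounds:
  fixes msg :: "nat \<Rightarrow> 'm" and d :: direction
  assumes inst: "cluster_instance n a C D E V ID L ctr" and "2 \<le> n"
    and layer: "V' \<subseteq> {v \<in> V. L v = i}"
  shows "let T = ptime (transmission_protocol k) (n, C, D, i);
             R = prand (transmission_protocol k) (n, C, D, i);
             inp = (\<lambda>v. LInput n C D i (ID v) (L v) (ID (ctr v))
                          (if v \<in> V' then Some (msg v) else None));
             \<Omega> = (PiE V (\<lambda>_. {bs::bool list. length bs = R}))
                 \<times> (PiE V (\<lambda>_. {bs::bool list. length bs = R}))
         in real T \<le> 512 * (real k + 1) * real C * (log 2 (real n)) ^ 3 \<and>
            measure_pmf.prob (pmf_of_set \<Omega>)
              {(pr, sh). task_ok d i E V L ctr V' msg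
                           (outputs (transmission_protocol k) E V inp pr (sh \<circ> ctr) T) \<and>
                         (\<forall>v\<in>V. real (energy (transmission_protocol k) E V inp pr (sh \<circ> ctr) T v)
                                 \<le> 512 * (real k + 1) * real C * (log 2 (real n)) ^ 3)}
              \<ge> 1 - 1 / real n ^ k"
proof -
  interpret clustered_network n C E V V' ctr
    using inst layer by (intro cluster_instance_clustered_network) auto
  have inj_ID: "inj_on ID V" using inst by (simp add: cluster_instance_def)
  have time: "real (slots k n C) \<le> 512 * (real k + 1) * real C * (log 2 (real n)) ^ 3"
    using \<open>2 \<le> n\<close> by (rule real_slots_le)
  have energy: "real (energy A E V inp pr sh (slots k n C) v)
      \<le> 512 * (real k + 1) * real C * (log 2 (real n)) ^ 3"
    for A :: "('m, 'm option \<times> nat list) protocol" and inp pr sh v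
    using of_nat_mono[OF energy_le_time] time by (rule order_trans)
  show ?thesis
    using transmission_protocol_succeeds[OF inj_ID \<open>2 \<le> n\<close> layer,
        where k = k and d = d and D = D and msg = msg] time energy
    by (simp add: Let_def ptime_transmission_protocol prand_transmission_protocol
        sample_space_def bitstrings_def)
qed

theorem lemma9:
  fixes d :: direction
  shows "\<forall>(a::nat) (k::nat). \<exists>(A::('m, 'm option \<times> nat list) protocol) (c::real). c > 0 \<and>
    (\<forall>n C D i E V ID L ctr V' (msg::nat \<Rightarrow> 'm).
       cluster_instance n a C D E V ID L ctr \<and> 2 \<le> n \<and> V' \<subseteq> {v \<in> V. L v = i} \<and>
       (d = Upward \<longrightarrow> 0 < i) \<longrightarrow>
       (let T = ptime A (n, C, D, i); R = prand A (n, C, D, i);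
            inp = (\<lambda>v. LInput n C D i (ID v) (L v) (ID (ctr v))
                         (if v \<in> V' then Some (msg v) else None));
            \<Omega> = (PiE V (\<lambda>_. {bs::bool list. length bs = R})) \<times> (PiE V (\<lambda>_. {bs::bool list. length bs = R}))
        in real T \<le> c * real C * (log 2 (real n)) ^ 3 \<and>
           measure_pmf.prob (pmf_of_set \<Omega>)
             {(pr, sh). task_ok d i E V L ctr V' msg (outputs A E V inp pr (sh \<circ> ctr) T) \<and>
                        (\<forall>v\<in>V. real (energy A E V inp pr (sh \<circ> ctr) T v) \<le> c * real C * (log 2 (real n)) ^ 3)}
             \<ge> 1 - 1 / real n ^ k))"
  apply (intro allI)
  subgoal for a k
    by (intro exI[of _ "transmission_protocol k"] exI[of _ "512 * (real k + 1)"] conjI allI impI)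
      (simp, elim conjE, rule transmission_protocol_meets_bounds, assumption+)
  done

end
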